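(* Let $\mathcal{U}\subseteq\mathbb{R}^n$ be a domain and $F=u\,\phi(r,s)$ a spherically symmetric Finsler metric on $\mathcal{U}$, where $u=|y|$, $r=|x|$, $s=\langle x,y\rangle/|y|$ and $\phi$ is smooth. Then the Cartan torsion of $F$ can be written as $$C_{ijk}=\frac{\mathcal{P}}{n+1}\big\{h_{ij}I_k+h_{jk}I_i+h_{ki}I_j\big\}+\frac{\mathcal{Q}}{\|\mathbf{I}\|^2}I_iI_jI_k,$$ where $$\mathcal{P}=\frac{(n+1)\big[(\phi-s\phi_s)\phi_s-s\phi\phi_{ss}\big]\big[\phi-s\phi_s+(r^2-s^2)\phi_{ss}\big]}{(n+1)\big[(\phi-s\phi_s)\phi_s-s\phi\phi_{ss}\big]\big[\phi-s\phi_s+(r^2-s^2)\phi_{ss}\big]+(r^2-s^2)\big[(\phi-s\phi_s)\phi_{sss}+3s\phi_{ss}^2\big]\phi},$$ $$\mathcal{Q}=\frac{(r^2-s^2)\big[(\phi-s\phi_s)\phi_{sss}+3s\phi_{ss}^2\big]\phi^2}{(n+1)\big[(\phi-s\phi_s)\phi_s-s\phi\phi_{ss}\big]\big[\phi-s\phi_s+(r^2-s^2)\phi_{ss}\big]\phi+(r^2-s^2)\big[(\phi-s\phi_s)\phi_{sss}+3s\phi_{ss}^2\big]\phi^2}.$$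
   Context: Here $|\cdot|$, $\langle\cdot,\cdot\rangle$ are the Euclidean norm and inner product; subscripts $s$ denote partial derivatives in $s$. For a Finsler metric $F$: $g_{ij}=\tfrac12(F^2)_{y^iy^j}$, $(g^{ij})$ its inverse, $C_{ijk}=\tfrac12\partial g_{ij}/\partial y^k$ the Cartan torsion, $I_i=g^{jk}C_{ijk}$ the mean Cartan torsion, $\|\mathbf{I}\|^2=g^{ij}I_iI_j$, and $h_{ij}=g_{ij}-F_{y^i}F_{y^j}$ the angular metric. *)

theory Defs
  imports "HOL-Analysis.Analysis"
begin

fun Ck_on :: "nat \<Rightarrow> 'a::euclidean_space set \<Rightarrow> ('a \<Rightarrow> real) \<Rightarrow> bool" where
  "Ck_on 0 S f = continuous_on S f"
| "Ck_on (Suc k) S f =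
     (\<exists>f'. (\<forall>z\<in>S. (f has_derivative f' z) (at z)) \<and> (\<forall>v\<in>Basis. Ck_on k S (\<lambda>z. f' z v)))"

definition smooth_on :: "'a::euclidean_space set \<Rightarrow> ('a \<Rightarrow> real) \<Rightarrow> bool" where
  "smooth_on S f \<longleftrightarrow> open S \<and> (\<forall>k. Ck_on k S f)"

definition pd :: "(real^'n \<Rightarrow> real) \<Rightarrow> 'n \<Rightarrow> real^'n \<Rightarrow> real" where
  "pd f i y = deriv (\<lambda>t. f (y + t *\<^sub>R axis i 1)) 0"

definition dS :: "(real \<Rightarrow> real \<Rightarrow> real) \<Rightarrow> real \<Rightarrow> real \<Rightarrow> real" where
  "dS phi r s = deriv (\<lambda>t. phi r t) s"

definition fund_g :: "(real^'n \<Rightarrow> real^'n \<Rightarrow> real) \<Rightarrow> real^'n \<Rightarrow> real^'n \<Rightarrow> 'n \<Rightarrow> 'n \<Rightarrow> real" where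
  "fund_g F x y i j = 1/2 * pd (\<lambda>w. pd (\<lambda>v. (F x v)^2) j w) i y"

definition fund_g_mat :: "(real^'n \<Rightarrow> real^'n \<Rightarrow> real) \<Rightarrow> real^'n \<Rightarrow> real^'n \<Rightarrow> real^'n^'n" where
  "fund_g_mat F x y = (\<chi> i j. fund_g F x y i j)"

definition fund_g_inv :: "(real^'n \<Rightarrow> real^'n \<Rightarrow> real) \<Rightarrow> real^'n \<Rightarrow> real^'n \<Rightarrow> 'n \<Rightarrow> 'n \<Rightarrow> real" where
  "fund_g_inv F x y i j = matrix_inv (fund_g_mat F x y) $ i $ j"

definition cartan :: "(real^'n \<Rightarrow> real^'n \<Rightarrow> real) \<Rightarrow> real^'n \<Rightarrow> real^'n \<Rightarrow> 'n \<Rightarrow> 'n \<Rightarrow> 'n \<Rightarrow> real" where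
  "cartan F x y i j k = 1/2 * pd (\<lambda>w. fund_g F x w i j) k y"

definition mean_cartan :: "(real^'n \<Rightarrow> real^'n \<Rightarrow> real) \<Rightarrow> real^'n \<Rightarrow> real^'n \<Rightarrow> 'n \<Rightarrow> real" where
  "mean_cartan F x y i = (\<Sum>j\<in>UNIV. \<Sum>k\<in>UNIV. fund_g_inv F x y j k * cartan F x y i j k)"

definition mean_cartan_norm2 :: "(real^'n \<Rightarrow> real^'n \<Rightarrow> real) \<Rightarrow> real^'n \<Rightarrow> real^'n \<Rightarrow> real" where
  "mean_cartan_norm2 F x y =
     (\<Sum>i\<in>UNIV. \<Sum>j\<in>UNIV. fund_g_inv F x y i j * mean_cartan F x y i * mean_cartan F x y j)"

definition angular :: "(real^'n \<Rightarrow> real^'n \<Rightarrow> real) \<Rightarrow> real^'n \<Rightarrow> real^'n \<Rightarrow> 'n \<Rightarrow> 'n \<Rightarrow> real" where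
  "angular F x y i j = fund_g F x y i j - pd (F x) i y * pd (F x) j y"

text \<open>F is a Finsler metric on U: smooth on U x (R^n - 0) (here: guaranteed by the
  smoothness hypothesis on phi for the spherically symmetric F below), positive,
  positively 1-homogeneous in y, with positive definite fundamental tensor.\<close>
definition finsler_metric :: "(real^'n) set \<Rightarrow> (real^'n \<Rightarrow> real^'n \<Rightarrow> real) \<Rightarrow> bool" where
  "finsler_metric U F \<longleftrightarrow>
     (\<forall>x\<in>U. \<forall>y. y \<noteq> 0 \<longrightarrow> F x y > 0) \<and>
     (\<forall>x\<in>U. \<forall>y. \<forall>c>0. F x (c *\<^sub>R y) = c * F x y) \<and>
     (\<forall>x\<in>U. \<forall>y. y \<noteq> 0 \<longrightarrow>
        (\<forall>v. v \<noteq> 0 \<longrightarrow> (\<Sum>i\<in>UNIV. \<Sum>j\<in>UNIV. fund_g F x y i j * v $ i * v $ j) > 0))"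

definition sph_sym :: "(real \<Rightarrow> real \<Rightarrow> real) \<Rightarrow> real^'n \<Rightarrow> real^'n \<Rightarrow> real" where
  "sph_sym phi x y = norm y * phi (norm x) (inner x y / norm y)"

end

theory Submission
  imports Defs
begin

(* Write l = y/|y| and d = x - s l, so that l is orthogonal to d and |d|^2 = r^2 - s^2.
   In terms of p = phi, p1 = phi_s, p2 = phi_ss at s, the fundamental tensor is
   g = p(p - s p1) Id + (p1^2 + p p2) d d + p p1 (d l + l d) + s p p1 l l, the angular metric is
   h = p(p - s p1)(Id - l l) + p p2 d d, and differentiating once more shows that the Cartan
   torsion has the form C_ijk = a (h_ij d_k + h_jk d_i + h_ki d_j) + b d_i d_j d_k.
   Computing g^-1 explicitly on the Hilbert form F_y = p l + p1 d (it goes to l/p) and on d gives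
   <F_y, g^-1 F_y> = 1 and <F_y, g^-1 d> = 0. For any tensor of this form, contracting with g^-1 then
   gives I = c d and ||I||^2 = c^2 <d, g^-1 d> with c = (n + 1) a + b <d, g^-1 d>; eliminating d
   yields the decomposition with P/(n + 1) = a/c and Q = b <d, g^-1 d>/c.
   Dividing by p - s p1 is legitimate: positive definiteness of g gives
   p - s p1 + (r^2 - s^2) p2 > 0 for every direction, so (p - s p1) sqrt (r^2 - s^2) increases on
   [-r, 0] and decreases on [0, r]; as it vanishes at s = +-r, it is positive in between. *)

lemma Ck_on_cong:
  assumes "open S" "\<And>z. z \<in> S \<Longrightarrow> f z = g z"
  shows "Ck_on k S f = Ck_on k S g"
  using assms
proof (induction k arbitrary: f g)
  case 0
  have "continuous_on S f = continuous_on S g"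
    by (rule continuous_on_cong[OF refl]) (use 0 in auto)
  then show ?case by simp
next
  case (Suc k)
  have "(\<forall>z\<in>S. (f has_derivative f' z) (at z)) = (\<forall>z\<in>S. (g has_derivative f' z) (at z))" for f'
    using Suc.prems by (metis has_derivative_transform_within_open)
  then show ?case by simp
qed

lemma Ck_on_Suc_imp_dS:
  assumes "open D" "Ck_on (Suc k) D (\<lambda>(r, s). f r s)"
  shows "\<And>r t. (r, t) \<in> D \<Longrightarrow> (f r has_real_derivative dS f r t) (at t)"
    and "Ck_on k D (\<lambda>(r, s). dS f r s)"
proof -
  obtain f' where f': "\<forall>z\<in>D. ((\<lambda>(r, s). f r s) has_derivative f' z) (at z)"
    and Ck: "\<forall>v\<in>Basis. Ck_on k D (\<lambda>z. f' z v)"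
    using assms(2) by auto
  have deriv: "(f r has_real_derivative f' (r, t) (0, 1)) (at t)" if "(r, t) \<in> D" for r t
  proof -
    have slice: "((\<lambda>t. (r, t)) has_derivative (\<lambda>h. (0, h))) (at t)"
      by (auto intro!: derivative_eq_intros)
    have "((\<lambda>(r, s). f r s) has_derivative f' (r, t)) (at (r, t))" using f' that by auto
    from has_derivative_compose[OF slice this]
    have "((\<lambda>t. f r t) has_derivative (\<lambda>h. f' (r, t) (0, h))) (at t)" by simp
    moreover have "linear (f' (r, t))" using f' that has_derivative_linear by blast
    then have "f' (r, t) (0, h) = h * f' (r, t) (0, 1)" for h
      using linear_scale[of "f' (r, t)" h "(0, 1)"] by simp
    then have "(\<lambda>h. f' (r, t) (0, h)) = (\<lambda>h. h * f' (r, t) (0, 1))" by (intro ext)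
    then have "(\<lambda>h. f' (r, t) (0, h)) = (*) (f' (r, t) (0, 1))" by (simp only: mult_commute_abs)
    ultimately show ?thesis unfolding has_field_derivative_def by simp
  qed
  have dS_eq: "dS f r t = f' (r, t) (0, 1)" if "(r, t) \<in> D" for r t
    unfolding dS_def using deriv[OF that] by (rule DERIV_imp_deriv)
  show "(f r has_real_derivative dS f r t) (at t)" if "(r, t) \<in> D" for r t
    using deriv[OF that] dS_eq[OF that] by simp
  have "(0::real, 1::real) \<in> Basis" by (simp add: Basis_prod_def)
  then have "Ck_on k D (\<lambda>z. f' z (0, 1))" using Ck by auto
  moreover have "Ck_on k D (\<lambda>z. f' z (0, 1)) = Ck_on k D (\<lambda>(r, s). dS f r s)"
    by (rule Ck_on_cong[OF assms(1)]) (auto simp: dS_eq)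
  ultimately show "Ck_on k D (\<lambda>(r, s). dS f r s)" by simp
qed

lemma smooth_on_has_real_derivative_dS:
  assumes "smooth_on D (\<lambda>(r, s). f r s)" "(r, t) \<in> D"
  shows "(f r has_real_derivative dS f r t) (at t)"
proof -
  have "open D" "Ck_on (Suc 0) D (\<lambda>(r, s). f r s)" using assms(1) unfolding smooth_on_def by auto
  from Ck_on_Suc_imp_dS(1)[OF this assms(2)] show ?thesis .
qed

lemma smooth_on_dS:
  assumes "smooth_on D (\<lambda>(r, s). f r s)"
  shows "smooth_on D (\<lambda>(r, s). dS f r s)"
proof -
  have D: "open D" and Ck: "Ck_on (Suc k) D (\<lambda>(r, s). f r s)" for k
    using assms unfolding smooth_on_def by auto
  have "Ck_on k D (\<lambda>(r, s). dS f r s)" for k by (rule Ck_on_Suc_imp_dS(2)[OF D Ck])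
  with D show ?thesis unfolding smooth_on_def by blast
qed

lemma pd_has_derivative:
  assumes "(G has_derivative G') (at y)"
  shows "pd G i y = G' (axis i 1)"
proof -
  have line: "((\<lambda>t. y + t *\<^sub>R axis i 1) has_derivative (\<lambda>h. h *\<^sub>R axis i 1)) (at 0)"
    by (auto intro!: derivative_eq_intros)
  have "((\<lambda>t. G (y + t *\<^sub>R axis i 1)) has_derivative (\<lambda>h. G' (h *\<^sub>R axis i 1))) (at 0)"
    using has_derivative_compose[OF line] assms by simp
  moreover have "linear G'" using assms has_derivative_linear by blast
  ultimately have "((\<lambda>t. G (y + t *\<^sub>R axis i 1)) has_real_derivative G' (axis i 1)) (at 0)"
    unfolding has_field_derivative_def by (simp add: linear_scale mult_commute_abs)
  then show ?thesis unfolding pd_def by (rule DERIV_imp_deriv)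
qed

lemma pd_cong_open:
  assumes "open T" "y \<in> T" "\<And>w. w \<in> T \<Longrightarrow> G w = H w"
  shows "pd G i y = pd H i y"
proof -
  have "open ((\<lambda>t. y + t *\<^sub>R axis i (1::real)) -` T)"
    by (rule open_vimage[OF assms(1)]) (intro continuous_intros)
  then have "eventually (\<lambda>t. t \<in> (\<lambda>t. y + t *\<^sub>R axis i (1::real)) -` T) (nhds 0)"
    by (rule eventually_nhds_in_open) (use assms(2) in simp)
  then have "eventually (\<lambda>t. G (y + t *\<^sub>R axis i 1) = H (y + t *\<^sub>R axis i 1)) (nhds 0)"
    by (rule eventually_mono) (use assms(3) in auto)
  then show ?thesis unfolding pd_def by (rule deriv_cong_ev) simp
qed

section \<open>A positivity lemma in one variable\<close>

lemma square_diff_pos_iff_abs_less: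
  fixes r t :: real
  assumes "r \<ge> 0"
  shows "r\<^sup>2 - t\<^sup>2 > 0 \<longleftrightarrow> \<bar>t\<bar> < r"
  using abs_le_square_iff[of r t] assms by auto

lemma has_real_derivative_mult_sqrt:
  fixes f f' f'' :: "real \<Rightarrow> real"
  assumes f: "(f has_real_derivative f' t) (at t)" and f': "(f' has_real_derivative f'' t) (at t)"
    and t: "\<bar>t\<bar> < r"
  shows "((\<lambda>t. (f t - t * f' t) * sqrt (r\<^sup>2 - t\<^sup>2)) has_real_derivative
      - t * ((f t - t * f' t + (r\<^sup>2 - t\<^sup>2) * f'' t) / sqrt (r\<^sup>2 - t\<^sup>2))) (at t)"
proof -
  define S where "S = sqrt (r\<^sup>2 - t\<^sup>2)"
  have r2_pos: "r\<^sup>2 - t\<^sup>2 > 0" using t square_diff_pos_iff_abs_less[of r t] by simp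
  then have S: "S > 0" "r\<^sup>2 - t\<^sup>2 = S * S" by (simp_all add: S_def)
  have lin: "((\<lambda>t. f t - t * f' t) has_real_derivative f' t - (1 * f' t + t * f'' t)) (at t)"
    using DERIV_diff[OF f DERIV_mult[OF DERIV_ident f']] by (simp add: algebra_simps)
  have "((\<lambda>t. r\<^sup>2 - t\<^sup>2) has_real_derivative (0 - 2 * t)) (at t)"
    by (auto intro!: derivative_eq_intros)
  from DERIV_chain2[OF DERIV_real_sqrt[OF r2_pos] this]
  have "((\<lambda>t. sqrt (r\<^sup>2 - t\<^sup>2)) has_real_derivative inverse S / 2 * (0 - 2 * t)) (at t)"
    by (simp add: S_def)
  from DERIV_mult[OF lin this]
  have "((\<lambda>t. (f t - t * f' t) * sqrt (r\<^sup>2 - t\<^sup>2)) has_real_derivative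
      (f' t - (1 * f' t + t * f'' t)) * S + inverse S / 2 * (0 - 2 * t) * (f t - t * f' t)) (at t)"
    by (simp add: S_def)
  moreover have "(f' t - (1 * f' t + t * f'' t)) * S + inverse S / 2 * (0 - 2 * t) * (f t - t * f' t)
      = - t * ((f t - t * f' t + (r\<^sup>2 - t\<^sup>2) * f'' t) / S)"
    unfolding S(2) using S(1) by (simp add: field_simps)
  ultimately show ?thesis by (simp add: S_def)
qed

lemma minus_s_deriv_pos:
  fixes f f' f'' :: "real \<Rightarrow> real" and r s :: real
  assumes f: "\<And>t. \<bar>t\<bar> \<le> r \<Longrightarrow> (f has_real_derivative f' t) (at t)"
    and f': "\<And>t. \<bar>t\<bar> \<le> r \<Longrightarrow> (f' has_real_derivative f'' t) (at t)"
    and pos: "\<And>t. \<bar>t\<bar> < r \<Longrightarrow> f t > 0 \<and> f t - t * f' t + (r\<^sup>2 - t\<^sup>2) * f'' t > 0"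
    and s: "\<bar>s\<bar> < r"
  shows "f s - s * f' s > 0"
proof -
  define q where "q t = (f t - t * f' t) * sqrt (r\<^sup>2 - t\<^sup>2)" for t
  have r2_pos: "r\<^sup>2 - t\<^sup>2 > 0" if "\<bar>t\<bar> < r" for t
    using that square_diff_pos_iff_abs_less[of r t] by simp
  have q_deriv: "(q has_real_derivative - t * ((f t - t * f' t + (r\<^sup>2 - t\<^sup>2) * f'' t) / sqrt (r\<^sup>2 - t\<^sup>2))) (at t)"
    if "\<bar>t\<bar> < r" for t
    unfolding q_def[abs_def] using that by (intro has_real_derivative_mult_sqrt f f') auto
  have quotient_pos: "(f t - t * f' t + (r\<^sup>2 - t\<^sup>2) * f'' t) / sqrt (r\<^sup>2 - t\<^sup>2) > 0"
    if "\<bar>t\<bar> < r" for t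
    using pos[OF that] r2_pos[OF that] by simp
  have q_cont: "continuous_on {-r..r} q"
  proof -
    have "continuous_on {-r..r} f" "continuous_on {-r..r} f'"
      by (auto intro!: continuous_at_imp_continuous_on DERIV_isCont[OF f] DERIV_isCont[OF f'])
    then show ?thesis unfolding q_def[abs_def] by (intro continuous_intros) auto
  qed
  \<comment> \<open>\<open>q\<close> vanishes at \<open>\<plusminus>r\<close>, increases on \<open>[-r, 0]\<close> and decreases on \<open>[0, r]\<close>\<close>
  have "q s > 0"
  proof (cases s "0::real" rule: linorder_cases)
    case less
    have "q (-r) < q s"
    proof (rule DERIV_pos_imp_increasing_open[of "-r" s q])
      fix t assume "-r < t" "t < s"
      then have t: "\<bar>t\<bar> < r" "t < 0" using less s by auto
      have "- t * ((f t - t * f' t + (r\<^sup>2 - t\<^sup>2) * f'' t) / sqrt (r\<^sup>2 - t\<^sup>2)) > 0"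
        using t(2) quotient_pos[OF t(1)] by (intro mult_pos_pos) auto
      then show "\<exists>y. DERIV q t :> y \<and> y > 0" using q_deriv[OF t(1)] by blast
    qed (use s in \<open>auto intro: continuous_on_subset[OF q_cont] simp: abs_less_iff\<close>)
    then show ?thesis by (simp add: q_def)
  next
    case equal
    then show ?thesis using pos[of 0] s by (simp add: q_def)
  next
    case greater
    have "q s > q r"
    proof (rule DERIV_neg_imp_decreasing_open[of s r q])
      fix t assume "s < t" "t < r"
      then have t: "\<bar>t\<bar> < r" "t > 0" using greater s by auto
      have "- t * ((f t - t * f' t + (r\<^sup>2 - t\<^sup>2) * f'' t) / sqrt (r\<^sup>2 - t\<^sup>2)) < 0"
        using t(2) quotient_pos[OF t(1)] by (intro mult_neg_pos) auto
      then show "\<exists>y. DERIV q t :> y \<and> y < 0" using q_deriv[OF t(1)] by blast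
    qed (use s in \<open>auto intro: continuous_on_subset[OF q_cont] simp: abs_less_iff\<close>)
    then show ?thesis by (simp add: q_def)
  qed
  then show ?thesis using r2_pos[OF s] by (simp add: q_def zero_less_mult_iff)
qed

section \<open>Tensors of the form of the Cartan torsion\<close>

lemma bilinear_sum_eq_inner:
  "(\<Sum>j\<in>UNIV. \<Sum>k\<in>UNIV. (M::real^'n^'n) $ j $ k * a $ j * b $ k) = a \<bullet> (M *v b)"
  by (simp add: inner_vec_def matrix_vector_mult_def sum_distrib_left algebra_simps)

lemma transpose_eq_self_nth:
  assumes "transpose G = G"
  shows "G $ i $ j = G $ j $ i"
  using assms by (metis transpose_def vec_lambda_beta)

lemma matrix_inv_left_of_positive_definite:
  fixes G :: "real^'n^'n"
  assumes "\<And>z. z \<noteq> 0 \<Longrightarrow> z \<bullet> (G *v z) > 0"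
  shows "matrix_inv G ** G = mat 1"
proof -
  have "\<exists>B. B ** G = mat 1"
    unfolding matrix_left_invertible_ker using assms by force
  then have "\<exists>B. G ** B = mat 1 \<and> B ** G = mat 1" using matrix_left_right_inverse by blast
  then show ?thesis unfolding matrix_inv_def by (rule someI2_ex) blast
qed

lemma transpose_left_inverse_of_symmetric:
  fixes G Gi :: "real^'n^'n"
  assumes "transpose G = G" "Gi ** G = mat 1"
  shows "transpose Gi = Gi"
proof -
  have left: "G ** Gi = mat 1" using assms(2) matrix_left_right_inverse by blast
  have "transpose Gi ** G = mat 1"
    using arg_cong[OF left, of transpose] assms(1)
    by (simp add: matrix_transpose_mul transpose_mat)
  then have right: "G ** transpose Gi = mat 1" using matrix_left_right_inverse by blast
  have "transpose Gi = (Gi ** G) ** transpose Gi" by (simp add: assms(2))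
  also have "\<dots> = Gi" by (simp add: matrix_mul_assoc[symmetric] right)
  finally show ?thesis .
qed

lemma trace_inverse_angular:
  fixes g gi :: "real^'n^'n" and lv :: "real^'n" and h :: "'n \<Rightarrow> 'n \<Rightarrow> real"
  assumes "transpose g = g" "gi ** g = mat 1" "lv \<bullet> (gi *v lv) = 1"
    and h: "\<And>i j. h i j = g $ i $ j - lv $ i * lv $ j"
  shows "(\<Sum>j\<in>UNIV. \<Sum>k\<in>UNIV. gi $ j $ k * h j k) = real CARD('n) - 1"
proof -
  have "(\<Sum>j\<in>UNIV. \<Sum>k\<in>UNIV. gi $ j $ k * g $ j $ k) = (\<Sum>j\<in>UNIV. (gi ** g) $ j $ j)"
    by (simp add: matrix_matrix_mult_def transpose_eq_self_nth[OF assms(1)])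
  also have "\<dots> = real CARD('n)" by (simp add: assms(2) mat_def)
  finally have "(\<Sum>j\<in>UNIV. \<Sum>k\<in>UNIV. gi $ j $ k * g $ j $ k) = real CARD('n)" .
  moreover have "(\<Sum>j\<in>UNIV. \<Sum>k\<in>UNIV. gi $ j $ k * lv $ j * lv $ k) = 1"
    using assms(3) by (simp add: bilinear_sum_eq_inner)
  moreover have "(\<Sum>j\<in>UNIV. \<Sum>k\<in>UNIV. gi $ j $ k * h j k)
      = (\<Sum>j\<in>UNIV. \<Sum>k\<in>UNIV. gi $ j $ k * g $ j $ k) - (\<Sum>j\<in>UNIV. \<Sum>k\<in>UNIV. gi $ j $ k * lv $ j * lv $ k)"
    by (simp add: h algebra_simps sum_subtractf)
  ultimately show ?thesis by simp
qed

lemma contract_inverse_angular: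
  fixes g gi :: "real^'n^'n" and lv d :: "real^'n" and h :: "'n \<Rightarrow> 'n \<Rightarrow> real"
  assumes "gi ** g = mat 1" "lv \<bullet> (gi *v d) = 0"
    and h: "\<And>i j. h i j = g $ i $ j - lv $ i * lv $ j"
  shows "(\<Sum>j\<in>UNIV. \<Sum>k\<in>UNIV. gi $ j $ k * (h i j * d $ k)) = d $ i"
proof -
  have g_gi: "g ** gi = mat 1" using assms(1) matrix_left_right_inverse by blast
  have "(\<Sum>j\<in>UNIV. \<Sum>k\<in>UNIV. gi $ j $ k * (h i j * d $ k)) = (\<Sum>j\<in>UNIV. h i j * (gi *v d) $ j)"
    by (simp add: matrix_vector_mult_def sum_distrib_left algebra_simps)
  also have "\<dots> = (g *v (gi *v d)) $ i - lv $ i * (lv \<bullet> (gi *v d))"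
    by (simp add: h matrix_vector_mult_def inner_vec_def algebra_simps sum_subtractf sum_distrib_left)
  also have "\<dots> = d $ i" using assms(2) g_gi by (simp add: matrix_vector_mul_assoc)
  finally show ?thesis .
qed

lemma mean_of_torsion_form:
  fixes g gi :: "real^'n^'n" and lv d :: "real^'n"
    and h :: "'n \<Rightarrow> 'n \<Rightarrow> real" and C :: "'n \<Rightarrow> 'n \<Rightarrow> 'n \<Rightarrow> real"
  assumes g_sym: "transpose g = g" and gi: "gi ** g = mat 1"
    and lv: "lv \<bullet> (gi *v lv) = 1" and lv_d: "lv \<bullet> (gi *v d) = 0"
    and h: "\<And>i j. h i j = g $ i $ j - lv $ i * lv $ j"
    and C: "\<And>i j k. C i j k = a * (h i j * d $ k + h j k * d $ i + h k i * d $ j) + b * d $ i * d $ j * d $ k"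
  shows "(\<Sum>j\<in>UNIV. \<Sum>k\<in>UNIV. gi $ j $ k * C i j k)
    = ((real CARD('n) + 1) * a + b * (d \<bullet> (gi *v d))) * d $ i"
proof -
  have gi_sym: "gi $ j $ k = gi $ k $ j" for j k
    by (rule transpose_eq_self_nth[OF transpose_left_inverse_of_symmetric[OF g_sym gi]])
  have h_sym: "h j k = h k j" for j k by (simp add: h transpose_eq_self_nth[OF g_sym] mult.commute)
  note contract = contract_inverse_angular[OF gi lv_d h]
  have contract': "(\<Sum>j\<in>UNIV. \<Sum>k\<in>UNIV. gi $ j $ k * (h k i * d $ j)) = d $ i" for i
  proof -
    have "(\<Sum>j\<in>UNIV. \<Sum>k\<in>UNIV. gi $ j $ k * (h k i * d $ j))
        = (\<Sum>k\<in>UNIV. \<Sum>j\<in>UNIV. gi $ k $ j * (h i k * d $ j))"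
      by (subst sum.swap) (simp add: gi_sym h_sym[of _ i])
    then show ?thesis using contract[of i] by simp
  qed
  have "(\<Sum>j\<in>UNIV. \<Sum>k\<in>UNIV. gi $ j $ k * C i j k)
      = (\<Sum>j\<in>UNIV. \<Sum>k\<in>UNIV. a * d $ i * (gi $ j $ k * h j k) + a * (gi $ j $ k * (h i j * d $ k))
          + a * (gi $ j $ k * (h k i * d $ j)) + b * d $ i * (gi $ j $ k * d $ j * d $ k))"
    by (simp add: C h_sym[of _ i] algebra_simps)
  also have "\<dots> = a * d $ i * (real CARD('n) - 1) + a * d $ i + a * d $ i + b * d $ i * (d \<bullet> (gi *v d))"
    by (simp add: sum.distrib sum_distrib_left[symmetric] trace_inverse_angular[OF g_sym gi lv h]
        contract contract' bilinear_sum_eq_inner del: sum_distrib_left)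
  finally show ?thesis by (simp add: algebra_simps)
qed

lemma torsion_form_decomposition:
  fixes g gi :: "real^'n^'n" and lv d :: "real^'n"
    and h :: "'n \<Rightarrow> 'n \<Rightarrow> real" and C :: "'n \<Rightarrow> 'n \<Rightarrow> 'n \<Rightarrow> real" and I :: "'n \<Rightarrow> real"
  assumes "transpose g = g" "gi ** g = mat 1" "lv \<bullet> (gi *v lv) = 1" "lv \<bullet> (gi *v d) = 0"
    and "\<And>i j. h i j = g $ i $ j - lv $ i * lv $ j"
    and C: "\<And>i j k. C i j k = a * (h i j * d $ k + h j k * d $ i + h k i * d $ j) + b * d $ i * d $ j * d $ k"
    and I: "\<And>i. I i = (\<Sum>j\<in>UNIV. \<Sum>k\<in>UNIV. gi $ j $ k * C i j k)"
    and N: "N = (\<Sum>i\<in>UNIV. \<Sum>j\<in>UNIV. gi $ i $ j * I i * I j)" and "N \<noteq> 0"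
  defines "c \<equiv> (real CARD('n) + 1) * a + b * (d \<bullet> (gi *v d))"
  shows "c \<noteq> 0"
    and "C i j k = a / c * (h i j * I k + h j k * I i + h k i * I j)
      + b * (d \<bullet> (gi *v d)) / c / N * I i * I j * I k"
proof -
  have I_eq: "I i = c * d $ i" for i
    using mean_of_torsion_form[OF assms(1-6)] I by (simp add: c_def)
  have "N = c\<^sup>2 * (\<Sum>i\<in>UNIV. \<Sum>j\<in>UNIV. gi $ i $ j * d $ i * d $ j)"
    by (simp add: N I_eq sum_distrib_left algebra_simps power2_eq_square)
  then have N_eq: "N = c\<^sup>2 * (d \<bullet> (gi *v d))" by (simp add: bilinear_sum_eq_inner)
  with \<open>N \<noteq> 0\<close> have "c \<noteq> 0" "d \<bullet> (gi *v d) \<noteq> 0" by auto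
  then show "c \<noteq> 0"
    and "C i j k = a / c * (h i j * I k + h j k * I i + h k i * I j)
      + b * (d \<bullet> (gi *v d)) / c / N * I i * I j * I k"
    by (simp_all add: C I_eq N_eq field_simps power2_eq_square)
qed

text \<open>With \<open>a\<close>, \<open>b\<close> the coefficients of the Cartan torsion of \<open>|y| \<phi>(s)\<close> and
  \<open>\<delta> = \<langle>d, g\<^sup>-\<^sup>1 d\<rangle>\<close>, the quotients \<open>a / c\<close> and \<open>b \<delta> / c\<close> are the paper's \<open>P / (n + 1)\<close> and \<open>Q\<close>.\<close>

lemma torsion_coefficients:
  fixes n u p s p1 p2 p3 dd :: real
  defines "K \<equiv> (p - s * p1) * p1 - s * p * p2"
    and "B \<equiv> p - s * p1 + dd * p2"
    and "E \<equiv> dd * ((p - s * p1) * p3 + 3 * s * p2\<^sup>2)"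
  assumes a_def: "a = K / (2 * u * (p * (p - s * p1)))"
    and b_def: "b = p\<^sup>2 * ((p - s * p1) * p3 + 3 * s * p2\<^sup>2) / (2 * u * (p * (p - s * p1)))"
    and \<delta>_def: "\<delta> = dd / (p * B)"
    and nz: "p \<noteq> 0" "p - s * p1 \<noteq> 0" "B \<noteq> 0" "u \<noteq> 0" "n + 1 \<noteq> 0"
    and c: "(n + 1) * a + b * \<delta> \<noteq> 0"
  shows "a / ((n + 1) * a + b * \<delta>) = (n + 1) * K * B / ((n + 1) * K * B + E * p) / (n + 1)"
    and "b * \<delta> / ((n + 1) * a + b * \<delta>) = E * p\<^sup>2 / ((n + 1) * K * B * p + E * p\<^sup>2)"
proof -
  define A where "A = p - s * p1"
  define D where "D = (n + 1) * K * B + E * p"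
  have nz': "p \<noteq> 0" "A \<noteq> 0" "B \<noteq> 0" "u \<noteq> 0" "n + 1 \<noteq> 0" using nz by (simp_all add: A_def)
  have a: "a = K / (2 * u * (p * A))" by (simp add: a_def A_def)
  have b: "b * \<delta> = E * p / (2 * u * (p * A) * B)"
    using nz' unfolding b_def \<delta>_def E_def A_def[symmetric] by (simp add: field_simps power2_eq_square)
  have c_eq: "(n + 1) * a + b * \<delta> = D / (2 * u * (p * A) * B)"
    using nz' unfolding b unfolding a D_def by (simp add: field_simps)
  with c have "D \<noteq> 0" by auto
  moreover from this nz' have "D * (n + 1) \<noteq> 0" by simp
  ultimately show "a / ((n + 1) * a + b * \<delta>) = (n + 1) * K * B / ((n + 1) * K * B + E * p) / (n + 1)"
    using nz'
    unfolding c_eq unfolding a D_def[symmetric] by (simp add: field_simps)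
  have "(n + 1) * K * B * p + E * p\<^sup>2 = D * p" by (simp add: D_def algebra_simps power2_eq_square)
  with \<open>D \<noteq> 0\<close> nz' show "b * \<delta> / ((n + 1) * a + b * \<delta>) = E * p\<^sup>2 / ((n + 1) * K * B * p + E * p\<^sup>2)"
    unfolding c_eq unfolding b by (simp add: field_simps power2_eq_square)
qed

definition sph_s :: "'a::real_inner \<Rightarrow> 'a \<Rightarrow> real" where
  "sph_s x y = inner x y / norm y"

definition perp_comp :: "'a::real_inner \<Rightarrow> 'a \<Rightarrow> 'a" where
  "perp_comp x y = x - sph_s x y *\<^sub>R sgn y"

lemma abs_sph_s_le: "\<bar>sph_s x y\<bar> \<le> norm x"
  unfolding sph_s_def
  by (cases "y = 0") (auto simp: divide_le_eq abs_divide Cauchy_Schwarz_ineq2)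

lemma inner_sgn_self: "y \<noteq> 0 \<Longrightarrow> sgn y \<bullet> sgn y = 1"
  by (simp add: sgn_div_norm power2_norm_eq_inner[symmetric] power2_eq_square)

lemma inner_sgn_eq_sph_s: "x \<bullet> sgn y = sph_s x y" "sgn y \<bullet> x = sph_s x y"
  by (simp_all add: sgn_div_norm sph_s_def divide_inverse_commute inner_commute)

lemma inner_sgn_perp_comp:
  assumes "y \<noteq> 0"
  shows "sgn y \<bullet> perp_comp x y = 0"
  unfolding perp_comp_def inner_diff_right inner_scaleR_right inner_sgn_self[OF assms]
  unfolding inner_sgn_eq_sph_s by simp

lemma inner_perp_comp_self:
  assumes "y \<noteq> 0"
  shows "perp_comp x y \<bullet> perp_comp x y = (norm x)\<^sup>2 - (sph_s x y)\<^sup>2"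
  unfolding perp_comp_def inner_diff_left inner_diff_right inner_scaleR_left inner_scaleR_right
    inner_sgn_self[OF assms]
  unfolding inner_sgn_eq_sph_s by (simp add: dot_square_norm power2_eq_square)

lemma abs_sph_s_less:
  assumes "y \<noteq> 0" "perp_comp x y \<noteq> 0"
  shows "\<bar>sph_s x y\<bar> < norm x"
proof -
  have "(norm x)\<^sup>2 - (sph_s x y)\<^sup>2 > 0"
    using assms(2) inner_perp_comp_self[OF assms(1), of x] by (metis inner_gt_zero_iff)
  then show ?thesis using square_diff_pos_iff_abs_less[of "norm x" "sph_s x y"] by simp
qed

lemma sph_s_surj:
  assumes y: "y \<noteq> 0" and "perp_comp x y \<noteq> 0" and t: "\<bar>t\<bar> < norm x"
  shows "\<exists>w. w \<noteq> 0 \<and> sph_s x w = t"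
proof -
  define s where "s = sph_s x y"
  define d where "d = x - s *\<^sub>R sgn y"
  define e where "e = (d \<bullet> d) *\<^sub>R sgn y - s *\<^sub>R d"
  have "d \<noteq> 0" using assms(2) by (simp add: d_def s_def perp_comp_def)
  have x: "x = d + s *\<^sub>R sgn y" by (simp add: d_def)
  have l: "sgn y \<bullet> sgn y = 1" "sgn y \<bullet> d = 0" "d \<bullet> sgn y = 0"
    using inner_sgn_self[OF y] inner_sgn_perp_comp[OF y, of x]
    by (simp_all add: d_def s_def perp_comp_def inner_commute)
  have "x \<bullet> e = 0" by (simp add: x e_def inner_add_left inner_diff_right l algebra_simps)
  moreover have "e \<noteq> 0"
  proof
    assume "e = 0"
    then have "sgn y \<bullet> e = 0" by simp
    with \<open>d \<noteq> 0\<close> show False by (simp add: e_def inner_diff_right l)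
  qed
  moreover have "x \<noteq> 0" using t by auto
  ultimately have x_e: "sgn x \<bullet> sgn e = 0" "sgn e \<bullet> sgn x = 0" "sgn x \<bullet> sgn x = 1" "sgn e \<bullet> sgn e = 1"
    "x \<bullet> sgn e = 0" "x \<bullet> sgn x = norm x"
    by (simp_all add: inner_sgn_self sgn_div_norm inner_commute dot_square_norm power2_eq_square)
  define q where "q = sqrt ((norm x)\<^sup>2 - t\<^sup>2)"
  have "(norm x)\<^sup>2 - t\<^sup>2 \<ge> 0" using t square_diff_pos_iff_abs_less[of "norm x" t] by simp
  then have q: "q\<^sup>2 = (norm x)\<^sup>2 - t\<^sup>2" by (simp add: q_def)
  define w where "w = t *\<^sub>R sgn x + q *\<^sub>R sgn e"
  have "w \<bullet> w = t\<^sup>2 + q\<^sup>2" by (simp add: w_def inner_add_left inner_add_right x_e power2_eq_square)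
  then have "(norm w)\<^sup>2 = (norm x)\<^sup>2" using q by (simp add: dot_square_norm)
  then have norm_w: "norm w = norm x" by (simp add: power2_eq_iff_nonneg)
  have "x \<bullet> w = t * norm x" by (simp add: w_def inner_add_right x_e)
  then have "sph_s x w = t" using \<open>x \<noteq> 0\<close> by (simp add: sph_s_def norm_w)
  moreover have "w \<noteq> 0" using norm_w \<open>x \<noteq> 0\<close> by auto
  ultimately show ?thesis by blast
qed

section \<open>The fundamental tensor in terms of \<open>l\<close> and \<open>d\<close>\<close>

text \<open>With \<open>p, p1, p2\<close> the values of \<open>\<phi>, \<phi>\<^sub>s, \<phi>\<^sub>s\<^sub>s\<close> at \<open>s\<close>, \<open>sph_gmat p p1 p2 s (sgn y) (perp_comp x y)\<close>
  is the fundamental tensor of \<open>|y| \<phi>(s)\<close>.\<close>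

definition sph_gmat :: "real \<Rightarrow> real \<Rightarrow> real \<Rightarrow> real \<Rightarrow> real^'n \<Rightarrow> real^'n \<Rightarrow> real^'n^'n" where
  "sph_gmat p p1 p2 s l d = (\<chi> i j. p * (p - s * p1) * (if i = j then 1 else 0) + (p1\<^sup>2 + p * p2) * d $ i * d $ j
     + p * p1 * (d $ i * l $ j + l $ i * d $ j) + s * p * p1 * l $ i * l $ j)"

lemma sph_gmat_mult:
  "sph_gmat p p1 p2 s l d *v z = (p * (p - s * p1)) *\<^sub>R z + ((p1\<^sup>2 + p * p2) * (d \<bullet> z) + p * p1 * (l \<bullet> z)) *\<^sub>R d
     + (p * p1 * (d \<bullet> z) + s * p * p1 * (l \<bullet> z)) *\<^sub>R l"
proof -
  have delta: "(\<Sum>j\<in>UNIV. (if i = j then 1 else 0) * z $ j) = z $ i" for i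
  proof -
    have "(if i = j then 1 else 0) * z $ j = (if i = j then z $ j else 0)" for j by simp
    then show ?thesis by (simp add: sum.delta)
  qed
  have "(sph_gmat p p1 p2 s l d *v z) $ i
      = (\<Sum>j\<in>UNIV. p * (p - s * p1) * ((if i = j then 1 else 0) * z $ j) + (p1\<^sup>2 + p * p2) * d $ i * (d $ j * z $ j)
          + p * p1 * d $ i * (l $ j * z $ j) + p * p1 * l $ i * (d $ j * z $ j) + s * p * p1 * l $ i * (l $ j * z $ j))"
    for i
    unfolding sph_gmat_def matrix_vector_mult_def by (simp add: algebra_simps)
  also have "\<dots> i = p * (p - s * p1) * z $ i + (p1\<^sup>2 + p * p2) * d $ i * (d \<bullet> z) + p * p1 * d $ i * (l \<bullet> z)
      + p * p1 * l $ i * (d \<bullet> z) + s * p * p1 * l $ i * (l \<bullet> z)" for i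
    by (simp add: sum.distrib sum_distrib_left[symmetric] inner_vec_def delta del: sum_distrib_left)
  finally show ?thesis by (simp add: vec_eq_iff algebra_simps)
qed

lemma transpose_sph_gmat: "transpose (sph_gmat p p1 p2 s l d) = sph_gmat p p1 p2 s l d"
  unfolding sph_gmat_def transpose_def by (simp add: vec_eq_iff algebra_simps)

context
  fixes l d :: "real^'n" and p s p1 p2 :: real
  assumes l_unit: "l \<bullet> l = 1" and l_d: "l \<bullet> d = 0"
begin

lemma sph_gmat_positive_definite_imp:
  assumes d: "d \<noteq> 0" and p: "p > 0"
    and pos: "\<And>z. z \<noteq> 0 \<Longrightarrow> z \<bullet> (sph_gmat p p1 p2 s l d *v z) > 0"
  shows "p - s * p1 + (d \<bullet> d) * p2 > 0"
proof -
  define \<gamma> where "\<gamma> = p1 * (d \<bullet> d) / p"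
  \<comment> \<open>\<open>z\<close> is \<open>g\<close>-orthogonal to \<open>l\<close>, so \<open>g(z, z)\<close> isolates the factor \<open>p - s p1 + |d|\<^sup>2 p2\<close>\<close>
  define z where "z = d - \<gamma> *\<^sub>R l"
  have \<gamma>: "\<gamma> * p = p1 * (d \<bullet> d)" using p by (simp add: \<gamma>_def)
  have d_l: "d \<bullet> l = 0" using l_d by (simp add: inner_commute)
  have z: "z \<bullet> d = d \<bullet> d" "d \<bullet> z = d \<bullet> d" "z \<bullet> l = - \<gamma>" "l \<bullet> z = - \<gamma>" "z \<bullet> z = d \<bullet> d + \<gamma>\<^sup>2"
    by (simp_all add: z_def inner_diff_left inner_diff_right d_l l_d l_unit power2_eq_square)
  have "z \<bullet> (sph_gmat p p1 p2 s l d *v z)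
      = p * (p - s * p1) * (d \<bullet> d) + (\<gamma> * p)\<^sup>2 + (p1\<^sup>2 + p * p2) * (d \<bullet> d)\<^sup>2 - 2 * p1 * (\<gamma> * p) * (d \<bullet> d)"
    unfolding sph_gmat_mult by (simp add: inner_add_right z algebra_simps power2_eq_square)
  also have "\<dots> = p * (d \<bullet> d) * (p - s * p1 + (d \<bullet> d) * p2)"
    unfolding \<gamma> by (simp add: algebra_simps power2_eq_square)
  finally have "p * (d \<bullet> d) * (p - s * p1 + (d \<bullet> d) * p2) > 0"
    using pos[of z] z(1) d by fastforce
  moreover have "p * (d \<bullet> d) > 0" using p d by simp
  ultimately show ?thesis using zero_less_mult_pos by blast
qed

lemma sph_gmat_left_inverse_apply:
  assumes inv: "Gi ** sph_gmat p p1 p2 s l d = mat 1" and p: "p \<noteq> 0"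
    and B: "p - s * p1 + (d \<bullet> d) * p2 \<noteq> 0"
  shows "Gi *v d = (1 / (p * (p - s * p1 + (d \<bullet> d) * p2))) *\<^sub>R (d - (p1 * (d \<bullet> d) / p) *\<^sub>R l)"
    and "Gi *v (p *\<^sub>R l + p1 *\<^sub>R d) = (1 / p) *\<^sub>R l"
proof -
  let ?G = "sph_gmat p p1 p2 s l d"
  have solve: "Gi *v v = w" if "?G *v w = v" for v w
    using inv that by (metis matrix_vector_mul_assoc matrix_vector_mul_lid)
  have d_l: "d \<bullet> l = 0" using l_d by (simp add: inner_commute)
  define \<beta> where "\<beta> = 1 / (p * (p - s * p1 + (d \<bullet> d) * p2))"
  define \<gamma> where "\<gamma> = \<beta> * p1 * (d \<bullet> d) / p"
  have \<beta>: "\<beta> * (p * (p - s * p1 + (d \<bullet> d) * p2)) = 1" using p B by (simp add: \<beta>_def)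
  have \<gamma>: "\<gamma> * p = \<beta> * p1 * (d \<bullet> d)" using p by (simp add: \<gamma>_def)
  define w where "w = \<beta> *\<^sub>R d - \<gamma> *\<^sub>R l"
  have "?G *v w = d"
  proof -
    have d_w: "d \<bullet> w = \<beta> * (d \<bullet> d)" and l_w: "l \<bullet> w = - \<gamma>"
      by (simp_all add: w_def inner_diff_right l_unit l_d d_l)
    have "?G *v w = (\<beta> * (p\<^sup>2 - s * p * p1 + (p1\<^sup>2 + p * p2) * (d \<bullet> d)) - p1 * (\<gamma> * p)) *\<^sub>R d
        + (p * (\<beta> * p1 * (d \<bullet> d)) - p * (\<gamma> * p)) *\<^sub>R l"
      unfolding sph_gmat_mult d_w l_w by (simp add: w_def algebra_simps power2_eq_square)
    also have "\<dots> = (\<beta> * (p * (p - s * p1 + (d \<bullet> d) * p2))) *\<^sub>R d"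
      unfolding \<gamma> by (simp add: algebra_simps power2_eq_square)
    finally show ?thesis by (simp add: \<beta>)
  qed
  then have "Gi *v d = w" by (rule solve)
  then show "Gi *v d = (1 / (p * (p - s * p1 + (d \<bullet> d) * p2))) *\<^sub>R (d - (p1 * (d \<bullet> d) / p) *\<^sub>R l)"
    by (simp add: w_def \<beta>_def \<gamma>_def scaleR_diff_right)
  have "?G *v ((1 / p) *\<^sub>R l) = p *\<^sub>R l + p1 *\<^sub>R d"
    unfolding sph_gmat_mult using p
    by (simp add: l_unit d_l vec_eq_iff field_simps power2_eq_square)
  then show "Gi *v (p *\<^sub>R l + p1 *\<^sub>R d) = (1 / p) *\<^sub>R l" by (rule solve)
qed

end

section \<open>Derivatives of a spherically symmetric metric\<close>

lemma has_derivative_sph_s: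
  fixes x w :: "'a::real_inner"
  shows "w \<noteq> 0 \<Longrightarrow> (sph_s x has_derivative (\<lambda>h. (x \<bullet> h - sph_s x w * (w \<bullet> h) / norm w) / norm w)) (at w)"
  unfolding sph_s_def
  apply (rule has_derivative_eq_rhs)
   apply (rule derivative_intros has_derivative_norm | simp)+
  apply (rule ext)
  apply (simp add: field_simps sgn_div_norm inner_commute power2_eq_square)
  done

lemma has_derivative_comp_sph_s:
  fixes x w :: "'a::real_inner"
  assumes "(g has_real_derivative D) (at (sph_s x w))" "w \<noteq> 0"
  shows "((\<lambda>w. g (sph_s x w)) has_derivative
      (\<lambda>h. D * ((x \<bullet> h - sph_s x w * (w \<bullet> h) / norm w) / norm w))) (at w)"
  using has_derivative_compose[OF has_derivative_sph_s[OF assms(2)] assms(1)[unfolded has_field_derivative_def]]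
  by (simp add: mult.commute)

lemma has_derivative_vec_nth: "((\<lambda>w. w $ j) has_derivative (\<lambda>h. h $ j)) (at (w::real^'n))"
  by (rule bounded_linear_imp_has_derivative) (rule bounded_linear_vec_nth)

lemma sgn_nth: "sgn y $ i = y $ i / norm y"
  by (simp add: sgn_div_norm divide_inverse_commute)

lemma perp_comp_nth: "perp_comp x y $ i = x $ i - sph_s x y * y $ i / norm y"
  by (simp add: perp_comp_def sgn_nth)

lemma axis_nth: "axis i (1::real) $ j = (if j = i then 1 else 0)"
  by (simp add: axis_def)

text \<open>\<open>f, f', f'', f'''\<close> stand for \<open>\<phi>(|x|, \<cdot>)\<close> and its first three \<open>s\<close>-derivatives.\<close>

locale sph_sym_at =
  fixes F :: "real^'n \<Rightarrow> real^'n \<Rightarrow> real" and x :: "real^'n"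
    and f f' f'' f''' :: "real \<Rightarrow> real"
  assumes F_eq: "\<And>v. F x v = norm v * f (sph_s x v)"
    and f_deriv: "\<And>t. \<bar>t\<bar> \<le> norm x \<Longrightarrow> (f has_real_derivative f' t) (at t)"
    and f'_deriv: "\<And>t. \<bar>t\<bar> \<le> norm x \<Longrightarrow> (f' has_real_derivative f'' t) (at t)"
    and f''_deriv: "\<And>t. \<bar>t\<bar> \<le> norm x \<Longrightarrow> (f'' has_real_derivative f''' t) (at t)"
begin

lemmas f_comp_deriv = has_derivative_comp_sph_s[OF f_deriv[OF abs_sph_s_le]]
lemmas f'_comp_deriv = has_derivative_comp_sph_s[OF f'_deriv[OF abs_sph_s_le]]
lemmas f''_comp_deriv = has_derivative_comp_sph_s[OF f''_deriv[OF abs_sph_s_le]]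

lemma pd_F_coord:
  assumes "w \<noteq> 0"
  shows "pd (F x) i w = f (sph_s x w) * w $ i / norm w
    + f' (sph_s x w) * (x $ i - sph_s x w * w $ i / norm w)"
  unfolding F_eq[abs_def]
  apply (rule trans[OF pd_has_derivative])
   apply (rule f_comp_deriv[OF assms] has_derivative_sph_s[OF assms] has_derivative_norm[OF assms]
      has_derivative_vec_nth derivative_intros)+
  using assms by (simp add: inner_axis inner_axis' sgn_div_norm field_simps)

lemma pd_F_sq_coord:
  assumes "w \<noteq> 0"
  shows "pd (\<lambda>v. (F x v)\<^sup>2) j w = 2 * (((f (sph_s x w))\<^sup>2 - sph_s x w * f (sph_s x w) * f' (sph_s x w)) * w $ j
    + norm w * f (sph_s x w) * f' (sph_s x w) * x $ j)"
  unfolding F_eq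
  apply (rule trans[OF pd_has_derivative])
   apply (rule f_comp_deriv[OF assms] has_derivative_sph_s[OF assms] has_derivative_norm[OF assms]
      has_derivative_vec_nth derivative_intros)+
  using assms by (simp add: inner_axis inner_axis' sgn_div_norm field_simps power2_eq_square)

text \<open>The fundamental tensor in the coordinates of \<open>x\<close> and \<open>w\<close>, the form in which it is differentiated.\<close>

definition g_coord :: "real^'n \<Rightarrow> 'n \<Rightarrow> 'n \<Rightarrow> real" where
  "g_coord w i j = ((f (sph_s x w))\<^sup>2 - sph_s x w * f (sph_s x w) * f' (sph_s x w)) * (if i = j then 1 else 0)
    + ((f' (sph_s x w))\<^sup>2 + f (sph_s x w) * f'' (sph_s x w)) * x $ i * x $ j
    + ((f (sph_s x w) - sph_s x w * f' (sph_s x w)) * f' (sph_s x w) - sph_s x w * f (sph_s x w) * f'' (sph_s x w))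
        / norm w * (x $ i * w $ j + x $ j * w $ i)
    - sph_s x w * ((f (sph_s x w) - sph_s x w * f' (sph_s x w)) * f' (sph_s x w)
        - sph_s x w * f (sph_s x w) * f'' (sph_s x w)) / (norm w)\<^sup>2 * w $ i * w $ j"

lemma pd_pd_F_sq_coord:
  assumes "w \<noteq> 0"
  shows "pd (\<lambda>w. 2 * (((f (sph_s x w))\<^sup>2 - sph_s x w * f (sph_s x w) * f' (sph_s x w)) * w $ j
    + norm w * f (sph_s x w) * f' (sph_s x w) * x $ j)) i w = 2 * g_coord w i j"
  unfolding g_coord_def
  apply (rule trans[OF pd_has_derivative])
   apply (rule f_comp_deriv[OF assms] f'_comp_deriv[OF assms] has_derivative_sph_s[OF assms]
      has_derivative_norm[OF assms] has_derivative_vec_nth derivative_intros)+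
  using assms apply (simp add: inner_axis inner_axis' sgn_div_norm axis_nth)
  apply (simp add: field_simps power2_eq_square)
  done

lemma pd_g_coord:
  assumes "w \<noteq> 0"
  shows "pd (\<lambda>w. g_coord w i j) k w =
    (let u = norm w; s = sph_s x w; K = (f s - s * f' s) * f' s - s * f s * f'' s;
         T = 3 * f' s * f'' s + f s * f''' s;
         l = (\<lambda>i. w $ i / u); d = (\<lambda>i. x $ i - s * w $ i / u);
         P = (\<lambda>i j. (if i = j then 1 else 0) - l i * l j)
     in (K * (P j k * d i + P i k * d j + P i j * d k) + T * d i * d j * d k) / u)"
proof -
  have norm_nz: "norm w \<noteq> 0" "(norm w)\<^sup>2 \<noteq> 0" using assms by simp_all
  show ?thesis
    unfolding g_coord_def
    apply (rule trans[OF pd_has_derivative])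
     apply (rule f_comp_deriv[OF assms] norm_nz f'_comp_deriv[OF assms] f''_comp_deriv[OF assms]
        has_derivative_sph_s[OF assms] has_derivative_norm[OF assms] has_derivative_vec_nth derivative_intros)+
    using assms apply (simp add: inner_axis inner_axis' sgn_div_norm axis_nth Let_def)
    apply (simp add: field_simps power2_eq_square)
    done
qed

lemma fund_g_F:
  assumes "w \<noteq> 0"
  shows "fund_g F x w i j = g_coord w i j"
proof -
  have "pd (\<lambda>w'. pd (\<lambda>v. (F x v)\<^sup>2) j w') i w
      = pd (\<lambda>w. 2 * (((f (sph_s x w))\<^sup>2 - sph_s x w * f (sph_s x w) * f' (sph_s x w)) * w $ j
          + norm w * f (sph_s x w) * f' (sph_s x w) * x $ j)) i w"
    by (rule pd_cong_open[of "-{0}"]) (use assms pd_F_sq_coord in auto)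
  also have "\<dots> = 2 * g_coord w i j" by (rule pd_pd_F_sq_coord[OF assms])
  finally show ?thesis unfolding fund_g_def by simp
qed

lemma g_coord_eq_sph_gmat:
  assumes "w \<noteq> 0"
  shows "g_coord w i j = sph_gmat (f (sph_s x w)) (f' (sph_s x w)) (f'' (sph_s x w)) (sph_s x w)
    (sgn w) (perp_comp x w) $ i $ j"
  using assms unfolding g_coord_def sph_gmat_def perp_comp_def sgn_div_norm
  by (simp add: field_simps power2_eq_square)

lemma cartan_F:
  assumes "y \<noteq> 0"
  shows "cartan F x y i j k =
    (let s = sph_s x y; l = sgn y; d = perp_comp x y; P = (\<lambda>i j. (if i = j then 1 else 0) - l $ i * l $ j)
     in (((f s - s * f' s) * f' s - s * f s * f'' s) * (P j k * d $ i + P i k * d $ j + P i j * d $ k)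
         + (3 * f' s * f'' s + f s * f''' s) * d $ i * d $ j * d $ k) / (2 * norm y))"
proof -
  have half: "1 / 2 * (a / b) = a / (2 * b)" for a b :: real
    by (cases "b = 0") (simp_all add: field_simps)
  have "cartan F x y i j k = 1 / 2 * pd (\<lambda>w. fund_g F x w i j) k y"
    by (simp add: cartan_def)
  also have "pd (\<lambda>w. fund_g F x w i j) k y = pd (\<lambda>w. g_coord w i j) k y"
    by (rule pd_cong_open[of "-{0}"]) (use assms fund_g_F in auto)
  also have "\<dots> = (let u = norm y; s = sph_s x y; K = (f s - s * f' s) * f' s - s * f s * f'' s;
         T = 3 * f' s * f'' s + f s * f''' s;
         l = (\<lambda>i. y $ i / u); d = (\<lambda>i. x $ i - s * y $ i / u);
         P = (\<lambda>i j. (if i = j then 1 else 0) - l i * l j)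
     in (K * (P j k * d i + P i k * d j + P i j * d k) + T * d i * d j * d k) / u)"
    by (rule pd_g_coord[OF assms])
  finally show ?thesis unfolding Let_def sgn_nth perp_comp_nth half .
qed

lemma pd_F:
  assumes "y \<noteq> 0"
  shows "pd (F x) i y = (f (sph_s x y) *\<^sub>R sgn y + f' (sph_s x y) *\<^sub>R perp_comp x y) $ i"
  by (simp add: pd_F_coord[OF assms] sgn_nth perp_comp_nth)

abbreviation fund_mat :: "real^'n \<Rightarrow> real^'n^'n" where
  "fund_mat w \<equiv> sph_gmat (f (sph_s x w)) (f' (sph_s x w)) (f'' (sph_s x w)) (sph_s x w) (sgn w) (perp_comp x w)"

lemma fund_g_mat_F: "w \<noteq> 0 \<Longrightarrow> fund_g_mat F x w = fund_mat w"
  by (simp add: fund_g_mat_def vec_eq_iff fund_g_F g_coord_eq_sph_gmat)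

lemma angular_F:
  assumes "y \<noteq> 0"
  shows "angular F x y i j = fund_mat y $ i $ j
    - (f (sph_s x y) *\<^sub>R sgn y + f' (sph_s x y) *\<^sub>R perp_comp x y) $ i
    * (f (sph_s x y) *\<^sub>R sgn y + f' (sph_s x y) *\<^sub>R perp_comp x y) $ j"
  using assms by (simp add: angular_def fund_g_F g_coord_eq_sph_gmat pd_F)

lemma cartan_F_angular:
  assumes y: "y \<noteq> 0" and A0: "f (sph_s x y) * (f (sph_s x y) - sph_s x y * f' (sph_s x y)) \<noteq> 0"
  shows "cartan F x y i j k =
    (let s = sph_s x y; p = f s; p1 = f' s; p2 = f'' s; p3 = f''' s; d = perp_comp x y; h = angular F x y
     in ((p - s * p1) * p1 - s * p * p2) / (2 * norm y * (p * (p - s * p1)))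
          * (h i j * d $ k + h j k * d $ i + h k i * d $ j)
        + p\<^sup>2 * ((p - s * p1) * p3 + 3 * s * p2\<^sup>2) / (2 * norm y * (p * (p - s * p1))) * d $ i * d $ j * d $ k)"
proof -
  define s where "s = sph_s x y"
  define p where "p = f s"
  define p1 where "p1 = f' s"
  define p2 where "p2 = f'' s"
  define p3 where "p3 = f''' s"
  define l where "l = sgn y"
  define d where "d = perp_comp x y"
  define P where "P i j = (if i = j then 1 else 0) - l $ i * l $ j" for i j
  define A0 where "A0 = p * (p - s * p1)"
  define K where "K = (p - s * p1) * p1 - s * p * p2"
  define T where "T = 3 * p1 * p2 + p * p3"
  define a where "a = K / (2 * norm y * A0)"
  define b where "b = p\<^sup>2 * ((p - s * p1) * p3 + 3 * s * p2\<^sup>2) / (2 * norm y * A0)"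
  have "A0 \<noteq> 0" using A0 by (simp add: A0_def p_def p1_def s_def)
  have h: "angular F x y i j = A0 * P i j + p * p2 * d $ i * d $ j" for i j
    unfolding angular_F[OF y] sph_gmat_def
    by (simp add: s_def p_def p1_def p2_def l_def d_def P_def A0_def algebra_simps power2_eq_square)
  have P_sym: "P i j = P j i" for i j by (simp add: P_def mult.commute)
  have a: "a * A0 = K / (2 * norm y)" using \<open>A0 \<noteq> 0\<close> by (simp add: a_def)
  have "3 * K * p * p2 + p\<^sup>2 * ((p - s * p1) * p3 + 3 * s * p2\<^sup>2) = T * A0"
    by (simp add: K_def T_def A0_def algebra_simps power2_eq_square)
  then have b: "3 * a * p * p2 + b = T / (2 * norm y)"
    using \<open>A0 \<noteq> 0\<close> by (simp add: a_def b_def add_divide_distrib[symmetric])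
  have "a * (angular F x y i j * d $ k + angular F x y j k * d $ i + angular F x y k i * d $ j)
      + b * d $ i * d $ j * d $ k
      = (a * A0) * (P j k * d $ i + P i k * d $ j + P i j * d $ k) + (3 * a * p * p2 + b) * d $ i * d $ j * d $ k"
    unfolding h by (simp add: P_sym[of k i] algebra_simps)
  also have "\<dots> = (K * (P j k * d $ i + P i k * d $ j + P i j * d $ k) + T * d $ i * d $ j * d $ k) / (2 * norm y)"
    unfolding a b by (simp add: add_divide_distrib)
  also have "\<dots> = cartan F x y i j k"
    unfolding cartan_F[OF y] by (simp add: Let_def s_def p_def p1_def p2_def p3_def l_def d_def P_def K_def T_def)
  finally show ?thesis
    by (simp add: Let_def a_def b_def A0_def K_def s_def p_def p1_def p2_def p3_def d_def)
qed

end

locale sph_finsler_at = sph_sym_at F x f f' f'' f'''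
  for F :: "real^'n \<Rightarrow> real^'n \<Rightarrow> real" and x :: "real^'n" and f f' f'' f''' :: "real \<Rightarrow> real" +
  assumes F_pos: "\<And>v. v \<noteq> 0 \<Longrightarrow> F x v > 0"
    and fund_g_pos: "\<And>w z. w \<noteq> 0 \<Longrightarrow> z \<noteq> 0 \<Longrightarrow> (\<Sum>i\<in>UNIV. \<Sum>j\<in>UNIV. fund_g F x w i j * z $ i * z $ j) > 0"
begin

lemma f_pos: "w \<noteq> 0 \<Longrightarrow> f (sph_s x w) > 0"
  using F_pos[of w] by (simp add: F_eq zero_less_mult_iff)

lemma fund_mat_pos: "w \<noteq> 0 \<Longrightarrow> z \<noteq> 0 \<Longrightarrow> z \<bullet> (fund_mat w *v z) > 0"
  using fund_g_pos[of w z] by (simp add: fund_g_F g_coord_eq_sph_gmat bilinear_sum_eq_inner)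

lemma B_pos:
  assumes w: "w \<noteq> 0" and s: "\<bar>sph_s x w\<bar> < norm x"
  shows "f (sph_s x w) - sph_s x w * f' (sph_s x w) + ((norm x)\<^sup>2 - (sph_s x w)\<^sup>2) * f'' (sph_s x w) > 0"
proof -
  have "perp_comp x w \<bullet> perp_comp x w = (norm x)\<^sup>2 - (sph_s x w)\<^sup>2"
    by (rule inner_perp_comp_self[OF w])
  moreover have "(norm x)\<^sup>2 - (sph_s x w)\<^sup>2 > 0"
    using s square_diff_pos_iff_abs_less[of "norm x" "sph_s x w"] by simp
  ultimately show ?thesis
    using sph_gmat_positive_definite_imp[OF inner_sgn_self[OF w] inner_sgn_perp_comp[OF w] _ f_pos[OF w] fund_mat_pos[OF w]]
    by fastforce
qed

lemma f_minus_s_f'_pos: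
  assumes y: "y \<noteq> 0" and d: "perp_comp x y \<noteq> 0"
  shows "f (sph_s x y) - sph_s x y * f' (sph_s x y) > 0"
proof (rule minus_s_deriv_pos[OF f_deriv f'_deriv _ abs_sph_s_less[OF y d]])
  fix t assume t: "\<bar>t\<bar> < norm x"
  then obtain w where "w \<noteq> 0" "sph_s x w = t" using sph_s_surj[OF y d] by blast
  then show "f t > 0 \<and> f t - t * f' t + ((norm x)\<^sup>2 - t\<^sup>2) * f'' t > 0"
    using f_pos B_pos t by blast
qed

lemma perp_comp_ne_0:
  assumes y: "y \<noteq> 0" and N: "mean_cartan_norm2 F x y \<noteq> 0"
  shows "perp_comp x y \<noteq> 0"
proof
  assume "perp_comp x y = 0"
  then have "cartan F x y i j k = 0" for i j k by (simp add: cartan_F[OF y] Let_def)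
  then have "mean_cartan F x y i = 0" for i by (simp add: mean_cartan_def)
  then show False using N by (simp add: mean_cartan_norm2_def)
qed

lemma fund_mat_inverse:
  assumes y: "y \<noteq> 0" and d: "perp_comp x y \<noteq> 0"
  defines "lv \<equiv> f (sph_s x y) *\<^sub>R sgn y + f' (sph_s x y) *\<^sub>R perp_comp x y"
    and "Gi \<equiv> matrix_inv (fund_mat y)"
  shows "Gi ** fund_mat y = mat 1"
    and "lv \<bullet> (Gi *v lv) = 1"
    and "lv \<bullet> (Gi *v perp_comp x y) = 0"
    and "perp_comp x y \<bullet> (Gi *v perp_comp x y) = ((norm x)\<^sup>2 - (sph_s x y)\<^sup>2)
      / (f (sph_s x y) * (f (sph_s x y) - sph_s x y * f' (sph_s x y)
          + ((norm x)\<^sup>2 - (sph_s x y)\<^sup>2) * f'' (sph_s x y)))"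
proof -
  let ?s = "sph_s x y"
  let ?d = "perp_comp x y"
  have l: "sgn y \<bullet> sgn y = 1" "sgn y \<bullet> ?d = 0" "?d \<bullet> sgn y = 0"
    using inner_sgn_self[OF y] inner_sgn_perp_comp[OF y] by (simp_all add: inner_commute)
  have dd: "?d \<bullet> ?d = (norm x)\<^sup>2 - ?s\<^sup>2" by (rule inner_perp_comp_self[OF y])
  have p: "f ?s > 0" by (rule f_pos[OF y])
  have B: "f ?s - ?s * f' ?s + (?d \<bullet> ?d) * f'' ?s > 0"
    unfolding dd by (rule B_pos[OF y abs_sph_s_less[OF y d]])
  show Gi: "Gi ** fund_mat y = mat 1"
    unfolding Gi_def by (rule matrix_inv_left_of_positive_definite[OF fund_mat_pos[OF y]])
  note Gi_apply = sph_gmat_left_inverse_apply[OF l(1,2) Gi]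
  have Gi_d: "Gi *v ?d = (1 / (f ?s * (f ?s - ?s * f' ?s + ((norm x)\<^sup>2 - ?s\<^sup>2) * f'' ?s)))
      *\<^sub>R (?d - (f' ?s * ((norm x)\<^sup>2 - ?s\<^sup>2) / f ?s) *\<^sub>R sgn y)"
    using Gi_apply(1) p B by (simp add: dd)
  have Gi_lv: "Gi *v lv = (1 / f ?s) *\<^sub>R sgn y"
    using Gi_apply(2) p B unfolding lv_def by simp
  show "lv \<bullet> (Gi *v lv) = 1"
    unfolding Gi_lv using p by (simp add: lv_def inner_add_left l)
  show "lv \<bullet> (Gi *v ?d) = 0"
    unfolding Gi_d using p by (simp add: lv_def inner_add_left inner_diff_right l dd)
  show "?d \<bullet> (Gi *v ?d) = ((norm x)\<^sup>2 - ?s\<^sup>2)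
      / (f ?s * (f ?s - ?s * f' ?s + ((norm x)\<^sup>2 - ?s\<^sup>2) * f'' ?s))"
    unfolding Gi_d by (simp add: inner_diff_right l dd)
qed

lemma cartan_decomposition:
  assumes y: "y \<noteq> 0" and N: "mean_cartan_norm2 F x y \<noteq> 0"
  shows "let n = real CARD('n); r = norm x; s = sph_s x y;
         p = f s; p1 = f' s; p2 = f'' s; p3 = f''' s;
         A = (p - s * p1) * p1 - s * p * p2;
         B = p - s * p1 + (r^2 - s^2) * p2;
         E = (r^2 - s^2) * ((p - s * p1) * p3 + 3 * s * p2^2);
         P = ((n + 1) * A * B) / ((n + 1) * A * B + E * p);
         Q = (E * p^2) / ((n + 1) * A * B * p + E * p^2);
         I = mean_cartan F x y; h = angular F x y
     in \<forall>i j k. cartan F x y i j k =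
          P / (n + 1) * (h i j * I k + h j k * I i + h k i * I j)
          + Q / mean_cartan_norm2 F x y * I i * I j * I k"
proof -
  let ?s = "sph_s x y"
  have d: "perp_comp x y \<noteq> 0" by (rule perp_comp_ne_0[OF y N])
  have p: "f ?s > 0" by (rule f_pos[OF y])
  have p_minus: "f ?s - ?s * f' ?s > 0" by (rule f_minus_s_f'_pos[OF y d])
  have B: "f ?s - ?s * f' ?s + ((norm x)\<^sup>2 - ?s\<^sup>2) * f'' ?s > 0"
    by (rule B_pos[OF y abs_sph_s_less[OF y d]])
  note inv = fund_mat_inverse[OF y d]
  have I: "mean_cartan F x y i
      = (\<Sum>j\<in>UNIV. \<Sum>k\<in>UNIV. matrix_inv (fund_mat y) $ j $ k * cartan F x y i j k)" for i
    by (simp add: mean_cartan_def fund_g_inv_def fund_g_mat_F[OF y])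
  have N_eq: "mean_cartan_norm2 F x y = (\<Sum>i\<in>UNIV. \<Sum>j\<in>UNIV.
      matrix_inv (fund_mat y) $ i $ j * mean_cartan F x y i * mean_cartan F x y j)"
    by (simp add: mean_cartan_norm2_def fund_g_inv_def fund_g_mat_F[OF y])
  have "f ?s * (f ?s - ?s * f' ?s) \<noteq> 0" using p p_minus by simp
  note decomposition = torsion_form_decomposition[OF transpose_sph_gmat inv(1-3) angular_F[OF y]
      cartan_F_angular[OF y this, unfolded Let_def] I N_eq N, unfolded inv(4)]
  have "f ?s \<noteq> 0" "f ?s - ?s * f' ?s \<noteq> 0" "f ?s - ?s * f' ?s + ((norm x)\<^sup>2 - ?s\<^sup>2) * f'' ?s \<noteq> 0"
    "norm y \<noteq> 0" "real CARD('n) + 1 \<noteq> 0"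
    using p p_minus B y by auto
  note coefficients = torsion_coefficients[OF refl refl refl this decomposition(1)]
  show ?thesis
    unfolding Let_def using decomposition(2)[unfolded coefficients] by blast
qed

end

lemma sph_sym_finsler_at:
  fixes x :: "real^'n"
  assumes smooth: "smooth_on D (\<lambda>(r, s). phi r s)"
    and dom_phi: "\<forall>x\<in>U. \<forall>s. \<bar>s\<bar> \<le> norm x \<longrightarrow> (norm x, s) \<in> D"
    and finsler: "finsler_metric U (sph_sym phi)" and x: "x \<in> U"
  shows "sph_finsler_at (sph_sym phi) x (phi (norm x)) (dS phi (norm x)) (dS (dS phi) (norm x))
    (dS (dS (dS phi)) (norm x))"
proof unfold_locales
  have D: "(norm x, t) \<in> D" if "\<bar>t\<bar> \<le> norm x" for t using dom_phi x that by blast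
  note dS_deriv = smooth_on_has_real_derivative_dS[OF _ D]
  show "sph_sym phi x v = norm v * phi (norm x) (sph_s x v)" for v
    by (simp add: sph_sym_def sph_s_def)
  show "(phi (norm x) has_real_derivative dS phi (norm x) t) (at t)"
    "(dS phi (norm x) has_real_derivative dS (dS phi) (norm x) t) (at t)"
    "(dS (dS phi) (norm x) has_real_derivative dS (dS (dS phi)) (norm x) t) (at t)"
    if "\<bar>t\<bar> \<le> norm x" for t
    using dS_deriv[OF smooth that] dS_deriv[OF smooth_on_dS[OF smooth] that]
      dS_deriv[OF smooth_on_dS[OF smooth_on_dS[OF smooth]] that] by auto
  show "v \<noteq> 0 \<Longrightarrow> sph_sym phi x v > 0"
    "w \<noteq> 0 \<Longrightarrow> z \<noteq> 0 \<Longrightarrow> (\<Sum>i\<in>UNIV. \<Sum>j\<in>UNIV. fund_g (sph_sym phi) x w i j * z $ i * z $ j) > 0"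
    for v w z
    using finsler x unfolding finsler_metric_def by blast+
qed

theorem corollary2:
  fixes U :: "(real^'n) set"
    and phi :: "real \<Rightarrow> real \<Rightarrow> real"
    and D :: "(real \<times> real) set"
  assumes domain: "open U" "connected U" "U \<noteq> {}"
    and smooth: "smooth_on D (\<lambda>(r, s). phi r s)"
    and dom_phi: "\<forall>x\<in>U. \<forall>s. \<bar>s\<bar> \<le> norm x \<longrightarrow> (norm x, s) \<in> D"
    and finsler: "finsler_metric U (sph_sym phi)"
  shows "\<forall>x\<in>U. \<forall>y. y \<noteq> 0 \<longrightarrow> mean_cartan_norm2 (sph_sym phi) x y \<noteq> 0 \<longrightarrow>
    (let F = sph_sym phi; n = real CARD('n); r = norm x; s = inner x y / norm y;
         p = phi r s; p1 = dS phi r s; p2 = dS (dS phi) r s; p3 = dS (dS (dS phi)) r s;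
         A = (p - s * p1) * p1 - s * p * p2;
         B = p - s * p1 + (r^2 - s^2) * p2;
         E = (r^2 - s^2) * ((p - s * p1) * p3 + 3 * s * p2^2);
         P = ((n + 1) * A * B) / ((n + 1) * A * B + E * p);
         Q = (E * p^2) / ((n + 1) * A * B * p + E * p^2);
         I = mean_cartan F x y; h = angular F x y
     in \<forall>i j k. cartan F x y i j k =
          P / (n + 1) * (h i j * I k + h j k * I i + h k i * I j)
          + Q / mean_cartan_norm2 F x y * I i * I j * I k)"
  using sph_finsler_at.cartan_decomposition[OF sph_sym_finsler_at[OF smooth dom_phi finsler]]
  unfolding Let_def sph_s_def by blast

end
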